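(* Let $H$ be a fixed graph, $\eta>0$ fixed, and $p=p(n)$. Suppose $n^{v(J)}p^{e(J)}=\omega(1)$ for every induced subgraph $J\subseteq H$ with at least one edge. Let $\mathcal C\subseteq\binom{[n]}{v(H)}$ be a family (depending on $n$, fixed independently of the random graph) with $|\mathcal C|\ge\eta\binom{n}{v(H)}$. Then asymptotically almost surely $\mathbb{G}(n,p)$ contains a copy of $H$ whose vertex set belongs to $\mathcal C$.
   Context: $\mathbb{G}(n,p)$ is the binomial random graph on vertex set $[n]$. *)

theory Defs
  imports "HOL-Probability.Probability"
begin

definition pairs :: "nat \<Rightarrow> nat set set" where
  "pairs n = {e. e \<subseteq> {1..n} \<and> card e = 2}"

text \<open>The binomial random graph G(n,p): each potential edge present independently
  with probability p. A graph is represented by its edge indicator on 2-subsets of [n]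
  (value False outside the potential edges).\<close>
definition Gnp :: "nat \<Rightarrow> real \<Rightarrow> (nat set \<Rightarrow> bool) pmf" where
  "Gnp n p = Pi_pmf (pairs n) False (\<lambda>_. bernoulli_pmf p)"

definition is_graph :: "nat \<Rightarrow> nat set set \<Rightarrow> bool" where
  "is_graph k EH \<longleftrightarrow> (\<forall>e\<in>EH. e \<subseteq> {0..<k} \<and> card e = 2)"

definition induced_edges :: "nat set set \<Rightarrow> nat set \<Rightarrow> nat set set" where
  "induced_edges EH S = {e\<in>EH. e \<subseteq> S}"

definition copy_on :: "nat \<Rightarrow> nat \<Rightarrow> nat set set \<Rightarrow> (nat set \<Rightarrow> bool) \<Rightarrow> nat set \<Rightarrow> bool" where
  "copy_on n k EH G A \<longleftrightarrow> (\<exists>\<phi>. inj_on \<phi> {0..<k} \<and> \<phi> ` {0..<k} \<subseteq> {1..n} \<and>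
      \<phi> ` {0..<k} = A \<and> (\<forall>e\<in>EH. G (\<phi> ` e)))"

end

theory Submission
  imports Defs
begin

text \<open>Second moment method. Place H on each A in C by a fixed bijection and let X count
  the placed copies present in G(n,p), so E X = |C| p^e(H). The copies on A and B can only
  share edges of the subgraph of H induced by the set S of vertices that the placement on A
  sends into B, and for given A and S there are at most n^(v(H) - |S|) choices of B. Grouping
  the pairs (A, B) by S gives
  P(X = 0) \<le> Var X / (E X)^2 \<le> sum over S of n^(v(H) - |S|) / (|C| p^e(S)),
  and since |C| \<ge> \<eta> (n / v(H))^v(H), each term is O(1 / (n^|S| p^e(S))), which tends to 0 by
  the density hypothesis.\<close>

lemma prob_Gnp_edges:
  assumes F: "F \<subseteq> pairs n" and q: "0 \<le> q" "q \<le> 1"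
  shows "measure_pmf.prob (Gnp n q) {G. \<forall>f\<in>F. G f} = q ^ card F"
proof -
  have fin: "finite (pairs n)"
    by (rule finite_subset[of _ "Pow {1..n}"]) (auto simp: pairs_def)
  define B where "B x = (if x \<in> F then {True} else UNIV)" for x
  have "{G. \<forall>f\<in>F. G f} = Pi (pairs n) B"
    using F unfolding B_def Pi_def by auto
  then have "measure_pmf.prob (Gnp n q) {G. \<forall>f\<in>F. G f}
      = (\<Prod>x\<in>pairs n. measure_pmf.prob (bernoulli_pmf q) (B x))"
    unfolding Gnp_def by (simp add: measure_Pi_pmf_Pi[OF fin])
  also have "\<dots> = (\<Prod>x\<in>pairs n. if x \<in> F then q else 1)"
    by (intro prod.cong refl) (simp add: B_def q measure_pmf_single)
  also have "\<dots> = q ^ card F"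
    using F fin by (simp add: prod.If_cases Int_absorb1)
  finally show ?thesis .
qed

lemma card_supersets_le:
  assumes T: "T \<subseteq> {1..n}"
  shows "card {B. B \<subseteq> {1..n} \<and> card B = k \<and> T \<subseteq> B} \<le> n ^ (k - card T)"
proof -
  let ?X = "{B. B \<subseteq> {1..n} \<and> card B = k \<and> T \<subseteq> B}"
  let ?Y = "{D. D \<subseteq> {1..n} \<and> card D = k - card T}"
  have finT: "finite T" using T finite_subset by blast
  have "inj_on (\<lambda>B. B - T) ?X" by (auto simp: inj_on_def)
  moreover have "(\<lambda>B. B - T) ` ?X \<subseteq> ?Y"
    using finT by (auto simp: card_Diff_subset)
  moreover have "finite ?Y" by (rule finite_subset[of _ "Pow {1..n}"]) auto
  ultimately have "card ?X \<le> card ?Y" by (simp add: card_inj_on_le)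
  also have "card ?Y = n choose (k - card T)" by (simp add: n_subsets)
  also have "\<dots> \<le> n ^ (k - card T)"
    by (cases "k - card T \<le> n") (auto simp: binomial_le_pow binomial_eq_0)
  finally show ?thesis .
qed

text \<open>If \<open>X\<close> counts the events that occur, then
  \<open>P(X = 0) (E X)\<^sup>2 \<le> E (X - E X)\<^sup>2 = E X\<^sup>2 - (E X)\<^sup>2\<close>.\<close>
lemma (in prob_space) prob_no_event_second_moment:
  assumes fin: "finite I" and E: "\<And>i. i \<in> I \<Longrightarrow> E i \<in> events"
  shows "prob {x\<in>space M. \<forall>i\<in>I. x \<notin> E i} * (\<Sum>i\<in>I. prob (E i))\<^sup>2
     \<le> (\<Sum>i\<in>I. \<Sum>j\<in>I. prob (E i \<inter> E j)) - (\<Sum>i\<in>I. prob (E i))\<^sup>2"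
proof -
  define \<mu> where "\<mu> = (\<Sum>i\<in>I. prob (E i))"
  define X where "X x = (\<Sum>i\<in>I. indicator (E i) x :: real)" for x
  define Z where "Z = {x\<in>space M. \<forall>i\<in>I. x \<notin> E i}"
  have ind: "integrable M (indicator A :: 'a \<Rightarrow> real)" if "A \<in> events" for A
    using that by (simp add: emeasure_eq_measure)
  have X2: "(X x)\<^sup>2 = (\<Sum>i\<in>I. \<Sum>j\<in>I. indicator (E i \<inter> E j) x)" for x
    unfolding X_def power2_eq_square sum_product by (simp add: indicator_inter_arith)
  have intX: "integrable M X"
    unfolding X_def using E by (auto intro!: Bochner_Integration.integrable_sum ind)
  have intX2: "integrable M (\<lambda>x. (X x)\<^sup>2)"
    unfolding X2 using E by (auto intro!: Bochner_Integration.integrable_sum ind)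
  have EX: "expectation X = \<mu>"
    unfolding X_def \<mu>_def using E by (simp add: Bochner_Integration.integral_sum ind emeasure_eq_measure)
  have EX2: "expectation (\<lambda>x. (X x)\<^sup>2) = (\<Sum>i\<in>I. \<Sum>j\<in>I. prob (E i \<inter> E j))"
    unfolding X2 using E
    by (simp add: Bochner_Integration.integral_sum Bochner_Integration.integrable_sum ind
        emeasure_eq_measure)
  have Zev: "Z \<in> events"
    unfolding Z_def using E fin by (auto intro!: sets.sets_Collect_finite_All)
  have "indicator Z x * \<mu>\<^sup>2 \<le> (X x - \<mu>)\<^sup>2" for x
  proof (cases "x \<in> Z")
    case True
    then have "X x = 0" unfolding X_def Z_def by (auto intro!: sum.neutral)
    then show ?thesis using True by simp
  qed simp
  then have "expectation (\<lambda>x. indicator Z x * \<mu>\<^sup>2) \<le> expectation (\<lambda>x. (X x - \<mu>)\<^sup>2)"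
    using Zev intX intX2 by (intro integral_mono) (auto simp: power2_diff intro!: ind)
  also have "\<dots> = expectation (\<lambda>x. (X x)\<^sup>2) - \<mu>\<^sup>2"
    using variance_eq[OF intX intX2] EX by simp
  finally show ?thesis
    using Zev unfolding EX2 Z_def \<mu>_def by simp
qed

definition mapped_edges :: "(nat \<Rightarrow> nat) \<Rightarrow> nat set set \<Rightarrow> nat set set" where
  "mapped_edges \<phi> EH = (\<lambda>e. \<phi> ` e) ` EH"

definition subsets_with_edges :: "nat \<Rightarrow> nat set set \<Rightarrow> nat set set" where
  "subsets_with_edges k EH = {S. S \<subseteq> {0..<k} \<and> induced_edges EH S \<noteq> {}}"

lemma finite_subsets_with_edges: "finite (subsets_with_edges k EH)"
  by (rule finite_subset[of _ "Pow {0..<k}"]) (auto simp: subsets_with_edges_def)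

lemma finite_graph_edges: "is_graph k EH \<Longrightarrow> finite EH"
  by (rule finite_subset[of _ "Pow {0..<k}"]) (auto simp: is_graph_def)

lemma card_induced_edges_le: "is_graph k EH \<Longrightarrow> card (induced_edges EH S) \<le> card EH"
  unfolding induced_edges_def by (intro card_mono finite_graph_edges) auto

lemma mapped_edges_subset_pairs:
  assumes H: "is_graph k EH" and \<phi>: "inj_on \<phi> {0..<k}" "\<phi> ` {0..<k} \<subseteq> {1..n}"
  shows "mapped_edges \<phi> EH \<subseteq> pairs n"
proof
  fix f assume "f \<in> mapped_edges \<phi> EH"
  then obtain e where e: "e \<in> EH" "f = \<phi> ` e" unfolding mapped_edges_def by blast
  with H have "e \<subseteq> {0..<k}" "card e = 2" by (auto simp: is_graph_def)
  with e \<phi> show "f \<in> pairs n"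
    by (auto simp: pairs_def card_image inj_on_subset)
qed

lemma card_mapped_edges:
  assumes H: "is_graph k EH" and \<phi>: "inj_on \<phi> {0..<k}"
  shows "card (mapped_edges \<phi> EH) = card EH"
  unfolding mapped_edges_def
proof (rule card_image, rule inj_onI)
  fix x y assume "x \<in> EH" "y \<in> EH" "\<phi> ` x = \<phi> ` y"
  with H show "x = y" using inj_on_image_eq_iff[OF \<phi>] by (auto simp: is_graph_def)
qed

lemma mapped_edges_Int_subset:
  assumes H: "is_graph k EH"
  shows "mapped_edges \<phi> EH \<inter> mapped_edges \<psi> EH
    \<subseteq> mapped_edges \<phi> (induced_edges EH {i\<in>{0..<k}. \<phi> i \<in> \<psi> ` {0..<k}})"
proof
  fix f assume "f \<in> mapped_edges \<phi> EH \<inter> mapped_edges \<psi> EH"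
  then obtain e e' where e: "e \<in> EH" "f = \<phi> ` e" and e': "e' \<in> EH" "f = \<psi> ` e'"
    unfolding mapped_edges_def by blast
  from H e e' have k: "e \<subseteq> {0..<k}" "e' \<subseteq> {0..<k}" by (auto simp: is_graph_def)
  then have "f \<subseteq> \<psi> ` {0..<k}" using e' by (simp add: image_mono)
  with e k have "e \<in> induced_edges EH {i\<in>{0..<k}. \<phi> i \<in> \<psi> ` {0..<k}}"
    unfolding induced_edges_def by auto
  with e show "f \<in> mapped_edges \<phi> (induced_edges EH {i\<in>{0..<k}. \<phi> i \<in> \<psi> ` {0..<k}})"
    unfolding mapped_edges_def by blast
qed

lemma overlap_excess_le:
  fixes q :: real
  assumes H: "is_graph k EH" and q: "0 \<le> q" "q \<le> 1"
    and \<phi>: "inj_on \<phi> {0..<k}" and \<psi>: "inj_on \<psi> {0..<k}"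
  defines "T \<equiv> {i\<in>{0..<k}. \<phi> i \<in> \<psi> ` {0..<k}}"
  shows "q ^ card (mapped_edges \<phi> EH \<union> mapped_edges \<psi> EH) - q ^ (2 * card EH)
    \<le> (if T \<in> subsets_with_edges k EH then q ^ (2 * card EH - card (induced_edges EH T)) else 0)"
proof -
  let ?F = "mapped_edges \<phi> EH" and ?F' = "mapped_edges \<psi> EH"
  have fin: "finite ?F" "finite ?F'"
    using finite_graph_edges[OF H] by (simp_all add: mapped_edges_def)
  have cardU: "card (?F \<union> ?F') = 2 * card EH - card (?F \<inter> ?F')"
    using card_Un_Int[OF fin] card_mapped_edges[OF H \<phi>] card_mapped_edges[OF H \<psi>] by simp
  have finI: "finite (induced_edges EH T)"
    using finite_graph_edges[OF H] by (simp add: induced_edges_def)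
  have "card (?F \<inter> ?F') \<le> card (mapped_edges \<phi> (induced_edges EH T))"
    using mapped_edges_Int_subset[OF H] finI unfolding T_def
    by (intro card_mono) (auto simp: mapped_edges_def)
  also have "\<dots> \<le> card (induced_edges EH T)"
    unfolding mapped_edges_def by (rule card_image_le[OF finI])
  finally have overlap: "card (?F \<inter> ?F') \<le> card (induced_edges EH T)" .
  show ?thesis
  proof (cases "T \<in> subsets_with_edges k EH")
    case True
    have "q ^ card (?F \<union> ?F') \<le> q ^ (2 * card EH - card (induced_edges EH T))"
      unfolding cardU using overlap card_induced_edges_le[OF H] q by (intro power_decreasing) auto
    moreover have "0 \<le> q ^ (2 * card EH)" using q by simp
    ultimately have "q ^ card (?F \<union> ?F') - q ^ (2 * card EH)
        \<le> q ^ (2 * card EH - card (induced_edges EH T))" by linarith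
    with True show ?thesis by simp
  next
    case False
    then have "induced_edges EH T = {}"
      by (auto simp: subsets_with_edges_def T_def)
    then have "card (?F \<union> ?F') = 2 * card EH" using overlap cardU by simp
    then show ?thesis using False by simp
  qed
qed

lemma card_sets_with_trace_le:
  assumes C: "C \<subseteq> {B. B \<subseteq> {1..n} \<and> card B = k}"
    and \<phi>: "inj_on \<phi> {0..<k}" "\<phi> ` {0..<k} \<subseteq> {1..n}" and S: "S \<subseteq> {0..<k}"
  shows "card {B\<in>C. {i\<in>{0..<k}. \<phi> i \<in> B} = S} \<le> n ^ (k - card S)"
proof -
  have "card {B\<in>C. {i\<in>{0..<k}. \<phi> i \<in> B} = S}
      \<le> card {B. B \<subseteq> {1..n} \<and> card B = k \<and> \<phi> ` S \<subseteq> B}"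
    using C S by (intro card_mono) (auto intro: finite_subset[of _ "Pow {1..n}"])
  also have "\<dots> \<le> n ^ (k - card (\<phi> ` S))"
    using \<phi> S by (intro card_supersets_le) auto
  also have "card (\<phi> ` S) = card S"
    using \<phi> S by (simp add: card_image inj_on_subset)
  finally show ?thesis .
qed

lemma sum_by_trace_le:
  fixes g :: "nat set \<Rightarrow> real"
  assumes C: "C \<subseteq> {B. B \<subseteq> {1..n} \<and> card B = k}"
    and \<phi>: "inj_on \<phi> {0..<k}" "\<phi> ` {0..<k} \<subseteq> {1..n}"
    and Ss: "finite Ss" "Ss \<subseteq> Pow {0..<k}" and g: "\<And>S. 0 \<le> g S"
  shows "(\<Sum>B\<in>C. if {i\<in>{0..<k}. \<phi> i \<in> B} \<in> Ss then g {i\<in>{0..<k}. \<phi> i \<in> B} else 0)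
    \<le> (\<Sum>S\<in>Ss. g S * real n ^ (k - card S))"
proof -
  define T where "T B = {i\<in>{0..<k}. \<phi> i \<in> B}" for B
  have finC: "finite C" by (rule finite_subset[of _ "Pow {1..n}"]) (use C in auto)
  have "(\<Sum>B\<in>C. if T B \<in> Ss then g (T B) else 0) = (\<Sum>S\<in>Ss. \<Sum>B\<in>C. if T B = S then g S else 0)"
    using Ss(1) by (subst sum.swap) (simp add: sum.delta)
  also have "\<dots> = (\<Sum>S\<in>Ss. g S * real (card {B\<in>C. T B = S}))"
    by (intro sum.cong refl) (simp add: sum.inter_filter[OF finC, symmetric])
  also have "\<dots> \<le> (\<Sum>S\<in>Ss. g S * real n ^ (k - card S))"
  proof (intro sum_mono mult_left_mono g)
    fix S assume "S \<in> Ss"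
    then have "card {B\<in>C. T B = S} \<le> n ^ (k - card S)"
      unfolding T_def using card_sets_with_trace_le[OF C \<phi>] Ss(2) by blast
    then show "real (card {B\<in>C. T B = S}) \<le> real n ^ (k - card S)"
      by (metis of_nat_le_iff of_nat_power)
  qed
  finally show ?thesis unfolding T_def .
qed

lemma sum_prob_copy_pairs_le:
  fixes q :: real
  assumes H: "is_graph k EH" and q: "0 \<le> q" "q \<le> 1"
    and C: "C \<subseteq> {A. A \<subseteq> {1..n} \<and> card A = k}"
    and \<phi>: "\<And>A. A \<in> C \<Longrightarrow> bij_betw (\<phi> A) {0..<k} A"
  defines "E A \<equiv> {G. \<forall>f\<in>mapped_edges (\<phi> A) EH. G f}"
  shows "(\<Sum>A\<in>C. \<Sum>B\<in>C. measure_pmf.prob (Gnp n q) (E A \<inter> E B)) - (real (card C) * q ^ card EH)\<^sup>2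
    \<le> real (card C) * (\<Sum>S\<in>subsets_with_edges k EH.
          q ^ (2 * card EH - card (induced_edges EH S)) * real n ^ (k - card S))"
proof -
  let ?Ss = "subsets_with_edges k EH"
  define g where "g S = q ^ (2 * card EH - card (induced_edges EH S))" for S
  define T where "T A B = {i\<in>{0..<k}. \<phi> A i \<in> B}" for A B
  have inj: "inj_on (\<phi> A) {0..<k}" and img: "\<phi> A ` {0..<k} \<subseteq> {1..n}"
    and T: "T A B = {i\<in>{0..<k}. \<phi> A i \<in> \<phi> B ` {0..<k}}" if "A \<in> C" "B \<in> C" for A B
    using \<phi>[OF that(1)] \<phi>[OF that(2)] C that by (auto simp: bij_betw_def T_def)
  have excess: "measure_pmf.prob (Gnp n q) (E A \<inter> E B) - q ^ (2 * card EH)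
      \<le> (if T A B \<in> ?Ss then g (T A B) else 0)" if AB: "A \<in> C" "B \<in> C" for A B
  proof -
    have "E A \<inter> E B = {G. \<forall>f\<in>mapped_edges (\<phi> A) EH \<union> mapped_edges (\<phi> B) EH. G f}"
      unfolding E_def by auto
    moreover have "mapped_edges (\<phi> A) EH \<union> mapped_edges (\<phi> B) EH \<subseteq> pairs n"
      using mapped_edges_subset_pairs[OF H] inj img AB by blast
    ultimately show ?thesis
      using overlap_excess_le[OF H q inj[OF AB] inj[OF AB(2,2)]] prob_Gnp_edges[OF _ q]
      unfolding T[OF AB] g_def by simp
  qed
  have "(real (card C) * q ^ card EH)\<^sup>2 = (\<Sum>A\<in>C. \<Sum>B\<in>C. q ^ (2 * card EH))"
    by (simp add: power_mult_distrib power_mult power2_eq_square)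
  then have "(\<Sum>A\<in>C. \<Sum>B\<in>C. measure_pmf.prob (Gnp n q) (E A \<inter> E B)) - (real (card C) * q ^ card EH)\<^sup>2
      = (\<Sum>A\<in>C. \<Sum>B\<in>C. measure_pmf.prob (Gnp n q) (E A \<inter> E B) - q ^ (2 * card EH))"
    by (simp add: sum_subtractf)
  also have "\<dots> \<le> (\<Sum>A\<in>C. \<Sum>B\<in>C. if T A B \<in> ?Ss then g (T A B) else 0)"
    by (intro sum_mono excess)
  also have "\<dots> \<le> (\<Sum>A\<in>C. \<Sum>S\<in>?Ss. g S * real n ^ (k - card S))"
    unfolding T_def using finite_subsets_with_edges q
    by (intro sum_mono sum_by_trace_le[OF C inj img]) (auto simp: subsets_with_edges_def g_def)
  finally show ?thesis by (simp add: g_def)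
qed

lemma prob_no_copy_second_moment:
  fixes q :: real
  assumes H: "is_graph k EH" and q: "0 \<le> q" "q \<le> 1"
    and C: "C \<subseteq> {A. A \<subseteq> {1..n} \<and> card A = k}"
  shows "measure_pmf.prob (Gnp n q) {G. \<not> (\<exists>A\<in>C. copy_on n k EH G A)} * (real (card C) * q ^ card EH)\<^sup>2
    \<le> real (card C) * (\<Sum>S\<in>subsets_with_edges k EH.
          q ^ (2 * card EH - card (induced_edges EH S)) * real n ^ (k - card S))"
proof -
  let ?P = "measure_pmf.prob (Gnp n q)"
  have finC: "finite C" by (rule finite_subset[of _ "Pow {1..n}"]) (use C in auto)
  have "\<forall>A\<in>C. \<exists>\<phi>. bij_betw \<phi> {0..<k} A"
    using C by (auto intro!: finite_same_card_bij intro: finite_subset)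
  then obtain \<phi> where \<phi>: "\<And>A. A \<in> C \<Longrightarrow> bij_betw (\<phi> A) {0..<k} A" by metis
  define E where "E A = {G. \<forall>f\<in>mapped_edges (\<phi> A) EH. G f}" for A
  have inj: "inj_on (\<phi> A) {0..<k}" and img: "\<phi> A ` {0..<k} = A" "A \<subseteq> {1..n}" if "A \<in> C" for A
    using \<phi>[OF that] C that by (auto simp: bij_betw_def)
  have "E A \<subseteq> {G. copy_on n k EH G A}" if "A \<in> C" for A
    using inj[OF that] img[OF that] unfolding E_def copy_on_def mapped_edges_def
    by (auto intro!: exI[of _ "\<phi> A"])
  then have no_copy: "?P {G. \<not> (\<exists>A\<in>C. copy_on n k EH G A)} \<le> ?P {G. \<forall>A\<in>C. G \<notin> E A}"
    by (intro measure_pmf.finite_measure_mono) auto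
  have probE: "?P (E A) = q ^ card EH" if "A \<in> C" for A
    using prob_Gnp_edges[OF mapped_edges_subset_pairs[OF H inj[OF that]] q]
      card_mapped_edges[OF H inj[OF that]] img[OF that] by (simp add: E_def)
  have "?P {G. \<not> (\<exists>A\<in>C. copy_on n k EH G A)} * (real (card C) * q ^ card EH)\<^sup>2
      \<le> ?P {G. \<forall>A\<in>C. G \<notin> E A} * (real (card C) * q ^ card EH)\<^sup>2"
    using no_copy by (rule mult_right_mono) simp
  also have "\<dots> \<le> (\<Sum>A\<in>C. \<Sum>B\<in>C. ?P (E A \<inter> E B)) - (real (card C) * q ^ card EH)\<^sup>2"
    using measure_pmf.prob_no_event_second_moment[where M = "Gnp n q" and I = C and E = E, OF finC]
    by (simp add: probE)
  also have "\<dots> \<le> real (card C) * (\<Sum>S\<in>subsets_with_edges k EH.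
          q ^ (2 * card EH - card (induced_edges EH S)) * real n ^ (k - card S))"
    using sum_prob_copy_pairs_le[OF H q C \<phi>] unfolding E_def .
  finally show ?thesis .
qed

lemma prob_no_copy_le:
  fixes q :: real
  assumes H: "is_graph k EH" and q: "0 \<le> q" "q \<le> 1" "0 < q ^ card EH"
    and C: "C \<subseteq> {A. A \<subseteq> {1..n} \<and> card A = k}" and "C \<noteq> {}"
  shows "measure_pmf.prob (Gnp n q) {G. \<not> (\<exists>A\<in>C. copy_on n k EH G A)}
    \<le> (\<Sum>S\<in>subsets_with_edges k EH.
          real n ^ (k - card S) / (real (card C) * q ^ card (induced_edges EH S)))"
proof -
  define c where "c = real (card C)"
  define m where "m = card EH"
  have cpos: "c > 0"
    using \<open>C \<noteq> {}\<close> finite_subset[OF C] by (auto simp: c_def card_gt_0_iff)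
  have cancel: "c * (a * N) / (c * x)\<^sup>2 = N / (c * b)" if "x * x = a * b" "x \<noteq> 0" for a b x N :: real
  proof -
    from that have "a \<noteq> 0" "b \<noteq> 0" by auto
    with that cpos show ?thesis by (simp add: power2_eq_square field_simps)
  qed
  have "0 < (c * q ^ m)\<^sup>2" using mult_pos_pos[OF cpos q(3)] unfolding m_def by (rule zero_less_power)
  then have "measure_pmf.prob (Gnp n q) {G. \<not> (\<exists>A\<in>C. copy_on n k EH G A)}
      \<le> (\<Sum>S\<in>subsets_with_edges k EH.
            c * (q ^ (2 * m - card (induced_edges EH S)) * real n ^ (k - card S))) / (c * q ^ m)\<^sup>2"
    using prob_no_copy_second_moment[OF H q(1,2) C]
    by (simp add: pos_le_divide_eq sum_distrib_left c_def m_def)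
  also have "\<dots> = (\<Sum>S\<in>subsets_with_edges k EH.
      real n ^ (k - card S) / (c * q ^ card (induced_edges EH S)))"
    unfolding sum_divide_distrib
  proof (intro sum.cong refl cancel)
    fix S
    have "card (induced_edges EH S) \<le> m" using card_induced_edges_le[OF H] by (simp add: m_def)
    then show "q ^ m * q ^ m = q ^ (2 * m - card (induced_edges EH S)) * q ^ card (induced_edges EH S)"
      by (simp add: power_add[symmetric] mult_2)
    show "q ^ m \<noteq> 0" using q(3) unfolding m_def by linarith
  qed
  finally show ?thesis by (simp add: c_def)
qed

lemma ge_binomial_fraction_bounds:
  fixes \<eta> :: real and c :: nat
  assumes "k \<le> n" and eta: "\<eta> > 0" and c: "\<eta> * real (n choose k) \<le> real c"
  shows "0 < c" and "real n ^ k / real c \<le> real k ^ k / \<eta>"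
proof -
  have kk: "0 < real k ^ k" by (cases "k = 0") auto
  have "\<eta> * (real n ^ k / real k ^ k) \<le> \<eta> * real (n choose k)"
    using binomial_ge_n_over_k_pow_k[OF assms(1), where 'a=real] eta
    by (intro mult_left_mono) (simp_all add: power_divide)
  with c have "\<eta> * (real n ^ k / real k ^ k) * real k ^ k \<le> real c * real k ^ k"
    using kk by (intro mult_right_mono) auto
  with kk have le: "\<eta> * real n ^ k \<le> real c * real k ^ k"
    by simp
  have "0 < real n ^ k" using assms(1) by (cases "k = 0") auto
  with le eta have "0 < real c * real k ^ k"
    using mult_pos_pos[OF eta] by (meson less_le_trans)
  with kk show "0 < c" by (simp add: zero_less_mult_iff)
  with le kk eta show "real n ^ k / real c \<le> real k ^ k / \<eta>"
    by (simp add: field_simps)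
qed

lemma eventually_prob_no_copy_le:
  fixes p :: "nat \<Rightarrow> real" and \<eta> :: real
  assumes H: "is_graph k EH" and eta: "\<eta> > 0"
    and p01: "\<And>n. 0 \<le> p n \<and> p n \<le> 1" and ppos: "\<forall>\<^sub>F n in sequentially. 0 < p n ^ card EH"
    and Csub: "\<And>n. C n \<subseteq> {A. A \<subseteq> {1..n} \<and> card A = k}"
    and Ccard: "\<And>n. real (card (C n)) \<ge> \<eta> * real (n choose k)"
  shows "\<forall>\<^sub>F n in sequentially.
    measure_pmf.prob (Gnp n (p n)) {G. \<not> (\<exists>A\<in>C n. copy_on n k EH G A)}
      \<le> (\<Sum>S\<in>subsets_with_edges k EH.
            real k ^ k / \<eta> * inverse (real n ^ card S * p n ^ card (induced_edges EH S)))"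
  using ppos eventually_ge_at_top[of k]
proof eventually_elim
  case (elim n)
  define c where "c = real (card (C n))"
  have cpos: "c > 0" and nk: "real n ^ k / c \<le> real k ^ k / \<eta>"
    using ge_binomial_fraction_bounds[OF elim(2) eta Ccard[of n]] by (simp_all add: c_def)
  have "C n \<noteq> {}" using cpos by (auto simp: c_def)
  with prob_no_copy_le[OF H _ _ elim(1) Csub] p01
  have "measure_pmf.prob (Gnp n (p n)) {G. \<not> (\<exists>A\<in>C n. copy_on n k EH G A)}
    \<le> (\<Sum>S\<in>subsets_with_edges k EH.
          real n ^ (k - card S) / (c * p n ^ card (induced_edges EH S)))"
    unfolding c_def by blast
  also have "\<dots> \<le> (\<Sum>S\<in>subsets_with_edges k EH.
      real k ^ k / \<eta> * inverse (real n ^ card S * p n ^ card (induced_edges EH S)))"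
  proof (rule sum_mono)
    fix S assume "S \<in> subsets_with_edges k EH"
    then have "card S \<le> k"
      using card_mono[of "{0..<k}" S] by (auto simp: subsets_with_edges_def)
    then have "real n ^ k = real n ^ (k - card S) * real n ^ card S"
      by (simp add: power_add[symmetric])
    moreover have "real n ^ card S \<noteq> 0" using elim(2) \<open>card S \<le> k\<close> by auto
    ultimately have "real n ^ (k - card S) / (c * p n ^ card (induced_edges EH S))
        = real n ^ k / c * inverse (real n ^ card S * p n ^ card (induced_edges EH S))"
      by (simp add: divide_inverse inverse_mult_distrib)
    also have "\<dots> \<le> real k ^ k / \<eta> * inverse (real n ^ card S * p n ^ card (induced_edges EH S))"
      using p01[of n] by (intro mult_right_mono[OF nk]) simp
    finally show "real n ^ (k - card S) / (c * p n ^ card (induced_edges EH S))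
        \<le> real k ^ k / \<eta> * inverse (real n ^ card S * p n ^ card (induced_edges EH S))" .
  qed
  finally show ?case .
qed

lemma eventually_edge_power_pos:
  fixes p :: "nat \<Rightarrow> real"
  assumes H: "is_graph k EH"
    and dens: "\<And>S. S \<subseteq> {0..<k} \<Longrightarrow> induced_edges EH S \<noteq> {} \<Longrightarrow>
        filterlim (\<lambda>n. real n ^ card S * p n ^ card (induced_edges EH S)) at_top sequentially"
  shows "\<forall>\<^sub>F n in sequentially. 0 < p n ^ card EH"
proof (cases "EH = {}")
  case False
  have "induced_edges EH {0..<k} = EH" using H by (auto simp: induced_edges_def is_graph_def)
  with False dens[of "{0..<k}"] have "\<forall>\<^sub>F n in sequentially. 0 < real n ^ k * p n ^ card EH"
    by (simp add: filterlim_at_top_dense)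
  then show ?thesis by eventually_elim (simp add: zero_less_mult_iff)
qed simp

theorem corollaryA2:
  fixes k :: nat and EH :: "nat set set" and \<eta> :: real
    and p :: "nat \<Rightarrow> real" and C :: "nat \<Rightarrow> nat set set"
  assumes H: "is_graph k EH"
    and eta: "\<eta> > 0"
    and p01: "\<And>n. 0 \<le> p n \<and> p n \<le> 1"
    and dens: "\<And>S. S \<subseteq> {0..<k} \<Longrightarrow> induced_edges EH S \<noteq> {} \<Longrightarrow>
        filterlim (\<lambda>n. real n ^ card S * p n ^ card (induced_edges EH S)) at_top sequentially"
    and Csub: "\<And>n. C n \<subseteq> {A. A \<subseteq> {1..n} \<and> card A = k}"
    and Ccard: "\<And>n. real (card (C n)) \<ge> \<eta> * real (n choose k)"
  shows "(\<lambda>n. measure_pmf.prob (Gnp n (p n)) {G. \<exists>A\<in>C n. copy_on n k EH G A})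
           \<longlonglongrightarrow> 1"
proof -
  define P where "P n = measure_pmf.prob (Gnp n (p n)) {G. \<not> (\<exists>A\<in>C n. copy_on n k EH G A)}" for n
  define bound where "bound n = (\<Sum>S\<in>subsets_with_edges k EH.
      real k ^ k / \<eta> * inverse (real n ^ card S * p n ^ card (induced_edges EH S)))" for n
  have "bound \<longlonglongrightarrow> 0"
    unfolding bound_def using dens
    by (intro tendsto_null_sum tendsto_mult_right_zero tendsto_inverse_0_at_top)
      (auto simp: subsets_with_edges_def)
  moreover have "\<forall>\<^sub>F n in sequentially. P n \<le> bound n"
    using eventually_prob_no_copy_le[OF H eta p01 eventually_edge_power_pos[OF H dens] Csub Ccard]
    unfolding P_def bound_def .
  ultimately have "P \<longlonglongrightarrow> 0"
    by (intro tendsto_sandwich[of "\<lambda>_. 0" P]) (auto simp: P_def)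
  then have "(\<lambda>n. 1 - P n) \<longlonglongrightarrow> 1"
    using tendsto_diff[OF tendsto_const[of 1]] by fastforce
  moreover have "1 - P n = measure_pmf.prob (Gnp n (p n)) {G. \<exists>A\<in>C n. copy_on n k EH G A}" for n
    using measure_pmf.prob_compl[of "{G. \<exists>A\<in>C n. copy_on n k EH G A}" "Gnp n (p n)"]
    by (simp add: P_def Compl_eq Diff_eq)
  ultimately show ?thesis by simp
qed

end
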